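(* Let $t$ be the Thue-Morse word, and let $i>0$ and $k>0$ be integers such that $t(i..i+k]$ is a palindrome, and suppose there is $m\in\{1,2,3\}$ with $i\equiv m\pmod 4$ and $i+k\equiv 4-m\pmod 4$. Then $t(i-1..i+k+1]$ is a palindrome, and $t(i+1..i+k-1]$ is a palindrome.
   Context: The Thue-Morse word $t=t[1]t[2]\cdots=abbabaabbaababba\cdots$ is the fixed point starting with $a$ of the morphism $\tau: a\mapsto abba,\ b\mapsto baab$. For $0\le i\le j$, $t(i..j]$ denotes the factor $t[i+1]t[i+2]\cdots t[j]$ (empty if $i=j$). A palindrome is a word $p=p[1]\cdots p[n]$ with $p[i]=p[n-i+1]$ for all $i$ (the empty word is a palindrome). *)

theory Defs
  imports Main
begin

datatype letter = a | b

fun tau_letter :: "letter \<Rightarrow> letter list" where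
  "tau_letter a = [a, b, b, a]"
| "tau_letter b = [b, a, a, b]"

definition tau :: "letter list \<Rightarrow> letter list" where
  "tau w = concat (map tau_letter w)"

text \<open>The Thue-Morse word t = t[1] t[2] ..., the fixed point of tau starting with a.
  Since tau^n(a) is a prefix of tau^(n+1)(a) of length 4^n >= n, the n-th letter (1-indexed)
  is the n-th letter of tau^n(a).\<close>
definition thue_morse :: "nat \<Rightarrow> letter" where
  "thue_morse n = ((tau ^^ n) [a]) ! (n - 1)"

text \<open>The factor t(i..j] = t[i+1] ... t[j] (empty if j <= i).\<close>
definition factor :: "nat \<Rightarrow> nat \<Rightarrow> letter list" where
  "factor i j = map thue_morse [i + 1..<j + 1]"

definition palindrome :: "'x list \<Rightarrow> bool" where
  "palindrome p \<longleftrightarrow> (\<forall>k. 1 \<le> k \<and> k \<le> length p \<longrightarrow> p ! (k - 1) = p ! (length p - k))"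

end

theory Submission
  imports Defs
begin

text \<open>A palindrome has equal first and last letters, so t[i+1] = t[i+k]. Cutting t into
  the blocks \<open>\<tau>(x) = x y y x\<close> (y the other letter), these two letters occupy the mirror
  positions m and 3 - m of their blocks. In both abba and baab, the letter at position m - 1
  is obtained from the one at position m in the same way as the letter at position 4 - m is
  from the one at position 3 - m; hence t[i] = t[i+k+1] as well, and the palindrome extends by
  one letter on each side. Removing the outer letters of a palindrome leaves a palindrome.\<close>

fun thue_morse0 :: "nat \<Rightarrow> letter" where
  "thue_morse0 j = (if j = 0 then a else tau_letter (thue_morse0 (j div 4)) ! (j mod 4))"

declare thue_morse0.simps [simp del]

lemma thue_morse0_block: "r < 4 \<Longrightarrow> thue_morse0 (4 * q + r) = tau_letter (thue_morse0 q) ! r"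
  by (subst thue_morse0.simps) (auto simp: thue_morse0.simps[of 0])

lemma tau_letter_thue_morse0: "tau_letter (thue_morse0 q) = map thue_morse0 [4 * q..<4 * q + 4]"
  using thue_morse0_block[of 0 q] thue_morse0_block[of 1 q]
    thue_morse0_block[of 2 q] thue_morse0_block[of 3 q]
  by (cases "thue_morse0 q") (simp_all add: upt_rec eval_nat_numeral)

lemma tau_map_thue_morse0: "tau (map thue_morse0 [0..<n]) = map thue_morse0 [0..<4 * n]"
proof (induction n)
  case (Suc n)
  have "[0..<4 * Suc n] = [0..<4 * n] @ [4 * n..<4 * n + 4]"
    using upt_add_eq_append[of 0 "4 * n" 4] by (simp add: ac_simps)
  with Suc show ?case by (simp add: tau_def tau_letter_thue_morse0)
qed (simp add: tau_def)

lemma funpow_tau_a: "(tau ^^ n) [a] = map thue_morse0 [0..<4 ^ n]"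
  by (induction n) (simp_all add: thue_morse0.simps[of 0] tau_map_thue_morse0)

lemma thue_morse_eq_thue_morse0: "0 < n \<Longrightarrow> thue_morse n = thue_morse0 (n - 1)"
proof -
  assume "0 < n"
  moreover have "n < 4 ^ n"
    by (induction n) auto
  ultimately show ?thesis
    by (simp add: thue_morse_def funpow_tau_a)
qed

lemma thue_morse0_mirror_extend:
  assumes x: "x mod 4 \<noteq> 0" and xz: "(x + z) mod 4 = 0"
    and "thue_morse0 x = thue_morse0 (z - 1)"
  shows "thue_morse0 (x - 1) = thue_morse0 z"
proof -
  define q q' where "q = x div 4" and "q' = (z - 1) div 4"
  have "z \<noteq> 0"
    using x xz by (cases z) simp_all
  then have "x + z = x + (z - 1) + 1"
    by simp
  then have sum: "(x mod 4 + (z - 1) mod 4 + 1) mod 4 = 0"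
    using xz by (metis mod_add_eq mod_add_left_eq)
  have digit_sum: "u + v = 3" if "u < 4" "v < 4" "u \<noteq> 0" "(u + v + 1) mod 4 = 0" for u v :: nat
    using that by presburger
  have mirror: "x mod 4 + (z - 1) mod 4 = 3"
    using x sum by (intro digit_sum) simp_all
  have "thue_morse0 x = tau_letter (thue_morse0 q) ! (x mod 4)"
    and "thue_morse0 (x - 1) = tau_letter (thue_morse0 q) ! (x mod 4 - 1)"
    and "thue_morse0 (z - 1) = tau_letter (thue_morse0 q') ! ((z - 1) mod 4)"
    and "thue_morse0 z = tau_letter (thue_morse0 q') ! ((z - 1) mod 4 + 1)"
    using x mirror \<open>z \<noteq> 0\<close>
      thue_morse0_block[of "x mod 4" q] thue_morse0_block[of "x mod 4 - 1" q]
      thue_morse0_block[of "(z - 1) mod 4" q'] thue_morse0_block[of "(z - 1) mod 4 + 1" q']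
    unfolding q_def q'_def by simp_all
  moreover have "x mod 4 \<in> {1, 2, 3}"
    using x mirror by auto
  ultimately show ?thesis
    using assms(3) mirror by (cases "thue_morse0 q"; cases "thue_morse0 q'") auto
qed

lemma palindrome_iff_rev: "palindrome xs \<longleftrightarrow> rev xs = xs"
proof -
  have "palindrome xs \<longleftrightarrow> (\<forall>l < length xs. xs ! (length xs - Suc l) = xs ! l)"
  proof
    assume "palindrome xs"
    show "\<forall>l < length xs. xs ! (length xs - Suc l) = xs ! l"
    proof (intro allI impI)
      fix l
      assume "l < length xs"
      then have "xs ! (Suc l - 1) = xs ! (length xs - Suc l)"
        using \<open>palindrome xs\<close>[unfolded palindrome_def, rule_format, of "Suc l"] by simp
      then show "xs ! (length xs - Suc l) = xs ! l"
        by simp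
    qed
  next
    assume h: "\<forall>l < length xs. xs ! (length xs - Suc l) = xs ! l"
    show "palindrome xs"
      unfolding palindrome_def
    proof (intro allI impI)
      fix k
      assume k: "1 \<le> k \<and> k \<le> length xs"
      then have "k - 1 < length xs"
        by linarith
      then have "xs ! (length xs - Suc (k - 1)) = xs ! (k - 1)"
        by (rule h[rule_format])
      with k show "xs ! (k - 1) = xs ! (length xs - k)"
        by simp
    qed
  qed
  also have "\<dots> \<longleftrightarrow> (\<forall>l < length xs. rev xs ! l = xs ! l)"
    by (simp add: rev_nth)
  also have "\<dots> \<longleftrightarrow> rev xs = xs"
    by (simp add: list_eq_iff_nth_eq)
  finally show ?thesis .
qed

lemma palindrome_Cons_snoc: "palindrome xs \<Longrightarrow> palindrome (x # xs @ [x])"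
  by (simp add: palindrome_iff_rev)

lemma palindrome_hd_eq_last: "palindrome xs \<Longrightarrow> hd xs = last xs"
  by (metis palindrome_iff_rev hd_rev)

lemma palindrome_butlast_tl: "palindrome xs \<Longrightarrow> palindrome (butlast (tl xs))"
proof -
  have rev_butlast: "rev (butlast ys) = tl (rev ys)" for ys :: "'a list"
    using butlast_rev[of "rev ys"] by simp
  assume "palindrome xs"
  then have "rev (butlast (tl xs)) = butlast (tl xs)"
    by (simp add: palindrome_iff_rev rev_butlast butlast_tl flip: butlast_rev)
  then show ?thesis by (simp add: palindrome_iff_rev)
qed

lemma factor_Cons: "i < j \<Longrightarrow> factor i j = thue_morse (i + 1) # factor (i + 1) j"
  by (simp add: factor_def upt_conv_Cons del: upt_Suc)

lemma factor_snoc: "i < j \<Longrightarrow> factor i j = factor i (j - 1) @ [thue_morse j]"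
  by (cases j) (simp_all add: factor_def)

lemma factor_Cons_snoc:
  assumes "0 < i" and "i \<le> j"
  shows "factor (i - 1) (j + 1) = thue_morse i # factor i j @ [thue_morse (j + 1)]"
  using assms factor_Cons[of "i - 1" "j + 1"] factor_snoc[of i "j + 1"] by simp

lemma palindrome_factor_ends:
  assumes "palindrome (factor i j)" and "i < j"
  shows "thue_morse (i + 1) = thue_morse j"
proof -
  have "thue_morse (i + 1) = hd (factor i j)"
    using factor_Cons[OF assms(2)] by simp
  also have "\<dots> = last (factor i j)"
    using assms(1) by (rule palindrome_hd_eq_last)
  also have "\<dots> = thue_morse j"
    using factor_snoc[OF assms(2)] by simp
  finally show ?thesis .
qed

lemma butlast_upt: "butlast [m..<n] = [m..<n - 1]"
  by (cases n) simp_all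

lemma factor_butlast_tl: "factor (i + 1) (j - 1) = butlast (tl (factor i j))"
  by (cases j) (simp_all add: factor_def butlast_upt flip: map_tl map_butlast del: upt_Suc)

theorem proposition6:
  fixes i k m :: nat
  assumes "i > 0" and "k > 0"
    and "palindrome (factor i (i + k))"
    and "m \<in> {1, 2, 3}"
    and "i mod 4 = m" and "(i + k) mod 4 = (4 - m) mod 4"
  shows "palindrome (factor (i - 1) (i + k + 1)) \<and> palindrome (factor (i + 1) (i + k - 1))"
proof -
  have "i mod 4 \<noteq> 0"
    using assms(4,5) by auto
  moreover have "(i + (i + k)) mod 4 = 0"
    using assms(4-6) mod_add_eq[of i 4 "i + k"] by auto
  moreover have "thue_morse0 i = thue_morse0 (i + k - 1)"
    using palindrome_factor_ends[OF assms(3)] assms(2) by (simp add: thue_morse_eq_thue_morse0)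
  ultimately have "thue_morse0 (i - 1) = thue_morse0 (i + k)"
    by (rule thue_morse0_mirror_extend)
  then have "thue_morse i = thue_morse (i + k + 1)"
    using assms(1) by (simp add: thue_morse_eq_thue_morse0)
  then have "palindrome (factor (i - 1) (i + k + 1))"
    using assms(1,3) factor_Cons_snoc[of i "i + k"] palindrome_Cons_snoc by simp
  moreover have "palindrome (factor (i + 1) (i + k - 1))"
    unfolding factor_butlast_tl using assms(3) by (rule palindrome_butlast_tl)
  ultimately show ?thesis ..
qed

end
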